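(* Let $d\ge4$ be an integer and $D=2^d$. Let $X,Y$ be real numbers with $Y>d$, and let $f$ be a real function on $(X,X+Y]$ with continuous derivatives up to order $d$ such that $0<\lambda\le f^{(d)}(x)\le\Lambda$ there. Then \[ \Bigl|\frac1Y\sum_{X<n\le X+Y}e^{2\pi i f(n)}\Bigr|\le C_4\max\Bigl\{\Bigl(\frac{\Lambda}{\lambda}\Bigr)^{4/D}\lambda^{1/(D-2)},\ Y^{-4/D}\lambda^{-1/(D-2)}\Bigr\}, \] where $C_4=2(2AB^3)^{1/4}\le10.016$, with $A=\frac{2}{\sqrt\pi}(1+\sqrt{1+3\pi/8})$ and $B=2+2\sqrt2$.
   Context: The sum runs over integers $n$. *)

theory Defs
  imports "HOL-Analysis.Analysis"
begin

text \<open>f has continuous derivatives up to order d on the set S: there is a family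
  F 0 = f, F 1, ..., F d of functions, each F k continuous on S, with F (k+1) the
  derivative of F k (taken within S, i.e. one-sided at a closed endpoint).\<close>
definition has_cont_derivs_upto :: "nat \<Rightarrow> (nat \<Rightarrow> real \<Rightarrow> real) \<Rightarrow> real set \<Rightarrow> bool" where
  "has_cont_derivs_upto d F S \<longleftrightarrow>
     (\<forall>k\<le>d. continuous_on S (F k)) \<and>
     (\<forall>k<d. \<forall>x\<in>S. (F k has_real_derivative F (Suc k) x) (at x within S))"

definition constA :: real where
  "constA = 2 / sqrt pi * (1 + sqrt (1 + 3 * pi / 8))"

definition constB :: real where
  "constB = 2 + 2 * sqrt 2"

definition constC4 :: real where
  "constC4 = 2 * (2 * constA * constB ^ 3) powr (1/4)"

end

theory Submission
  imports Defs
begin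

(*
  This is van der Corput's k-th derivative test with explicit constants: for k >= 2,
    |sum| <= c_k (Y R^(4/2^k) lam^(a_k) + Y^(1 - 4/2^k) lam^(-a_k)),   R = Lam / lam,
  where a_k = 1 / (2^k - 2), c_2 = 8, c_3 = 13/2 and c_k = 5 for k >= 4. The theorem follows
  since 5 (a + b) <= 10 max a b and C4 >= 10.

  For k = 2 the integers are grouped by the integer nearest to f'(n) + delta. Where f' is within
  delta of an integer there are O(delta / lam + 1) terms; elsewhere f' stays delta away from the
  integers and increases, so the Kusmin-Landau inequality bounds the group by O(1 / delta). With
  O(Lam Y) groups and delta = sqrt lam this gives Y Lam / sqrt lam + 1 / sqrt lam.

  For the step k -> k + 1, Weyl-van der Corput differencing with H about lam^(-2 a_(k+1)) bounds
  |S|^2 by Y^2 / H plus (Y / H) times the sum over h < H of the sums S_h for f(x + h) - f(x),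
  whose k-th derivative lies in [h lam, h Lam]. The induction hypothesis bounds each S_h, and the
  exponents a_k are exactly those for which the resulting terms recombine into the bound for k + 1.
*)

section \<open>The Kusmin--Landau inequality\<close>

lemma norm_abel_sum_le_variation:
  fixes t :: "nat \<Rightarrow> real" and w :: "nat \<Rightarrow> complex"
  assumes "1 \<le> L" and dec: "\<And>j. Suc j < L \<Longrightarrow> t (Suc j) \<le> t j"
    and w: "\<And>j. norm (w j) \<le> 1"
  shows "norm ((\<Sum>j<L. of_real (t j) * (w (Suc j) - w j)) + of_real (t 0) * w 0
                - of_real (t (L - 1)) * w L) \<le> t 0 - t (L - 1)"
  using assms(1) dec
proof (induction L rule: dec_induct)
  case base
  then show ?case by (simp add: algebra_simps)
next
  case (step L)
  let ?R = "(\<Sum>j<L. of_real (t j) * (w (Suc j) - w j)) + of_real (t 0) * w 0 - of_real (t (L - 1)) * w L"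
  have IH: "norm ?R \<le> t 0 - t (L - 1)" using step by auto
  have t_dec: "t L \<le> t (L - 1)" using step.hyps step.prems[of "L - 1"] by auto
  have split: "(\<Sum>j<Suc L. of_real (t j) * (w (Suc j) - w j)) + of_real (t 0) * w 0 - of_real (t L) * w (Suc L)
        = ?R + of_real (t (L - 1) - t L) * w L"
    by (simp add: algebra_simps)
  have "norm (of_real (t (L - 1) - t L) * w L) \<le> t (L - 1) - t L"
    unfolding norm_mult norm_of_real using w[of L] t_dec by (simp add: mult_left_le)
  then show ?case
    unfolding diff_Suc_1 split using IH norm_triangle_ineq[of ?R "of_real (t (L - 1) - t L) * w L"]
    by linarith
qed

lemma norm_abel_sum_le:
  fixes t :: "nat \<Rightarrow> real" and w :: "nat \<Rightarrow> complex"
  assumes dec: "\<And>j. Suc j < L \<Longrightarrow> t (Suc j) \<le> t j"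
    and w: "\<And>j. norm (w j) \<le> 1" and t: "\<And>j. j < L \<Longrightarrow> \<bar>t j\<bar> \<le> T" and "0 \<le> T"
  shows "norm (\<Sum>j<L. of_real (t j) * (w (Suc j) - w j)) \<le> 4 * T"
proof (cases "L = 0")
  case True
  then show ?thesis using \<open>0 \<le> T\<close> by simp
next
  case False
  let ?S = "\<Sum>j<L. of_real (t j) * (w (Suc j) - w j)"
  let ?a = "of_real (t 0) * w 0" and ?b = "of_real (t (L - 1)) * w L"
  have "norm (?S + ?a - ?b) \<le> t 0 - t (L - 1)"
    using False dec w by (intro norm_abel_sum_le_variation) auto
  moreover have "norm ?a \<le> T" "norm ?b \<le> T"
    using t[of 0] t[of "L - 1"] w[of 0] w[of L] False
    by (auto simp: norm_mult intro: mult_le_one[of _ 1, simplified] order_trans[OF mult_left_le])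
  moreover have "t 0 - t (L - 1) \<le> 2 * T" using t[of 0] t[of "L - 1"] False by auto
  moreover have "norm ?S \<le> norm (?S + ?a - ?b) + norm ?a + norm ?b"
    using norm_triangle_ineq4[of "?S + ?a - ?b" ?a] norm_triangle_ineq[of "?S + ?a - ?b - ?a" ?b]
    by simp
  ultimately show ?thesis by linarith
qed

lemma cis_minus_one_inverse:
  assumes "sin (pi * x) \<noteq> 0"
  shows "(- 1/2 - \<i> / 2 * of_real (cot (pi * x))) * (cis (2 * pi * x) - 1) = 1"
proof -
  define th where "th = pi * x"
  have sin: "sin th \<noteq> 0" using assms by (simp add: th_def)
  have pyth: "sin th * sin th + cos th * cos th = 1"
    using sin_cos_squared_add[of th] by (simp add: power2_eq_square)
  have cis_eq: "cis (2 * th) - 1 = Complex (- 2 * (sin th * sin th)) (2 * sin th * cos th)"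
    using pyth by (simp add: complex_eq_iff sin_double cos_double power2_eq_square)
  have "cos th * (cos th * (sin th * 2)) + sin th * (sin th * (sin th * 2)) = sin th * 2"
    using pyth by algebra
  then have "(- 1/2 - \<i> / 2 * of_real (cos th / sin th)) * (cis (2 * th) - 1) = 1"
    unfolding cis_eq using sin by (simp add: complex_eq_iff field_simps)
  then show ?thesis by (simp add: th_def cot_def mult.assoc)
qed

lemma cot_antimono:
  assumes "0 < x" "x \<le> y" "y < pi"
  shows "cot y \<le> cot x"
proof -
  have "\<exists>d. DERIV cot z :> d \<and> d \<le> 0" if "x \<le> z" "z \<le> y" for z
  proof -
    have "sin z > 0" using that assms by (intro sin_gt_zero) auto
    then show ?thesis by (intro exI[of _ "-inverse ((sin z)\<^sup>2)"]) auto
  qed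
  then show ?thesis using DERIV_nonpos_imp_nonincreasing[of x y cot] assms by auto
qed

lemma cot_le_inverse:
  assumes "0 < x" "x < pi / 2"
  shows "cot x \<le> 1 / x"
proof -
  have "x \<le> tan x" using abs_tan_ge[of x] tan_gt_zero[of x] assms by simp
  then show ?thesis using assms by (simp add: cot_altdef inverse_eq_divide frac_le)
qed

lemma cis_2pi_diff_int: "cis (2 * pi * (x - of_int m)) = cis (2 * pi * x)"
  by (simp add: right_diff_distrib cis_divide[symmetric])

text \<open>With \<open>x j\<close> the excess of the \<open>j\<close>-th difference over \<open>m\<close>, every term satisfies
  \<open>w j = (- 1/2 - \<i>/2 cot (\<pi> x j)) (w (j + 1) - w j)\<close>; the cotangents decrease and are
  bounded by \<open>cot (\<pi> \<delta>)\<close>, so summation by parts applies.\<close>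
lemma kusmin_landau:
  fixes G :: "nat \<Rightarrow> real" and m :: int and \<delta> :: real
  assumes "0 < \<delta>" "\<delta> < 1/2"
    and diff: "\<And>j. j < L \<Longrightarrow> m + \<delta> \<le> G (Suc j) - G j \<and> G (Suc j) - G j \<le> m + 1 - \<delta>"
    and mono: "\<And>j. Suc j < L \<Longrightarrow> G (Suc j) - G j \<le> G (Suc (Suc j)) - G (Suc j)"
  shows "norm (\<Sum>j\<le>L. cis (2 * pi * G j)) \<le> 2 + 2 * cot (pi * \<delta>)"
proof -
  define w where "w j = cis (2 * pi * G j)" for j
  define x where "x j = G (Suc j) - G j - m" for j
  define t where "t j = cot (pi * x j)" for j
  define T where "T = cot (pi * \<delta>)"
  have "0 \<le> T" unfolding T_def using assms(1,2) by (intro less_imp_le cot_gt_zero) auto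
  have x: "\<delta> \<le> x j \<and> x j \<le> 1 - \<delta>" if "j < L" for j using diff[OF that] unfolding x_def by auto
  have w: "norm (w j) \<le> 1" for j unfolding w_def by simp
  have term_eq: "w j = (- 1/2 - \<i> / 2 * of_real (t j)) * (w (Suc j) - w j)" if "j < L" for j
  proof -
    have "sin (pi * x j) > 0" using x[OF that] assms(1) by (intro sin_gt_zero) auto
    then have inv: "(- 1/2 - \<i> / 2 * of_real (t j)) * (cis (2 * pi * x j) - 1) = 1"
      unfolding t_def by (intro cis_minus_one_inverse) auto
    have "w (Suc j) = w j * cis (2 * pi * x j)"
      unfolding w_def x_def cis_2pi_diff_int by (simp add: cis_mult algebra_simps)
    then have "(- 1/2 - \<i> / 2 * of_real (t j)) * (w (Suc j) - w j)
        = w j * ((- 1/2 - \<i> / 2 * of_real (t j)) * (cis (2 * pi * x j) - 1))"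
      by (simp add: algebra_simps)
    then show ?thesis using inv by simp
  qed
  have t_dec: "t (Suc j) \<le> t j" if "Suc j < L" for j
    unfolding t_def using mono[OF that] x[of j] x[of "Suc j"] that assms(1)
    by (intro cot_antimono) (auto simp: x_def)
  have t_bound: "\<bar>t j\<bar> \<le> T" if "j < L" for j
  proof -
    have "t j \<le> T" unfolding t_def T_def using x[OF that] assms(1) by (intro cot_antimono) auto
    moreover have "cot (pi * (1 - \<delta>)) \<le> t j" unfolding t_def using x[OF that] assms(1,2)
      by (intro cot_antimono) auto
    moreover have "cot (pi * (1 - \<delta>)) = - T" unfolding T_def by (simp add: cot_def algebra_simps)
    ultimately show ?thesis by auto
  qed
  let ?A = "\<Sum>j<L. of_real (t j) * (w (Suc j) - w j)"
  have "(\<Sum>j<L. w j) = (\<Sum>j<L. (- 1/2) * (w (Suc j) - w j) - \<i> / 2 * (of_real (t j) * (w (Suc j) - w j)))"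
    by (intro sum.cong refl) (subst term_eq, auto simp: field_simps)
  also have "\<dots> = (- 1/2) * (\<Sum>j<L. w (Suc j) - w j) - \<i> / 2 * ?A"
    by (simp add: sum_subtractf sum_distrib_left sum_divide_distrib[symmetric] sum_negf)
  also have "(\<Sum>j<L. w (Suc j) - w j) = w L - w 0"
    by (rule sum_lessThan_telescope)
  finally have "norm (\<Sum>j<L. w j) \<le> norm ((- 1/2) * (w L - w 0)) + norm (\<i> / 2 * ?A)"
    by (metis norm_triangle_ineq4)
  also have "\<dots> \<le> 1 + 2 * T"
  proof -
    have "norm (w L - w 0) \<le> 2" using norm_triangle_ineq4[of "w L" "w 0"] w[of L] w[of 0] by linarith
    moreover have "norm ?A \<le> 4 * T" using t_dec w t_bound \<open>0 \<le> T\<close> by (rule norm_abel_sum_le)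
    ultimately show ?thesis by (simp add: norm_mult norm_divide)
  qed
  finally have "norm (\<Sum>j\<le>L. w j) \<le> 2 + 2 * T"
    using norm_triangle_ineq[of "\<Sum>j<L. w j" "w L"] w[of L] by (simp add: lessThan_Suc_atMost[symmetric])
  then show ?thesis unfolding w_def T_def .
qed

section \<open>Exponential sums over integers in an interval\<close>

lemma card_int_le_diameter:
  fixes A :: "int set"
  assumes "finite A" and diam: "\<And>a b. a \<in> A \<Longrightarrow> b \<in> A \<Longrightarrow> real_of_int (b - a) \<le> D" and "0 \<le> D"
  shows "real (card A) \<le> D + 1"
proof (cases "A = {}")
  case True
  then show ?thesis using \<open>0 \<le> D\<close> by simp
next
  case False
  define a where "a = Min A"
  have "a \<in> A" unfolding a_def using \<open>finite A\<close> False by simp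
  have "A \<subseteq> {a..a + \<lfloor>D\<rfloor>}"
  proof
    fix b assume "b \<in> A"
    then have "a \<le> b" "real_of_int (b - a) \<le> D"
      using \<open>finite A\<close> diam[OF \<open>a \<in> A\<close>] unfolding a_def by auto
    then have "b - a \<le> \<lfloor>D\<rfloor>" by linarith
    then show "b \<in> {a..a + \<lfloor>D\<rfloor>}" using \<open>a \<le> b\<close> by simp
  qed
  then have "card A \<le> nat (\<lfloor>D\<rfloor> + 1)" using card_mono[of "{a..a + \<lfloor>D\<rfloor>}" A] by simp
  then show ?thesis using \<open>0 \<le> D\<close> by linarith
qed

lemma int_Ioc_eq_atLeastAtMost:
  fixes X Z :: real
  shows "{n::int. X < of_int n \<and> of_int n \<le> Z} = {\<lfloor>X\<rfloor> + 1..\<lfloor>Z\<rfloor>}"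
  by (auto simp: floor_less_iff le_floor_iff) (linarith+)

lemma finite_int_Ioc:
  fixes X Z :: real
  shows "finite {n::int. X < of_int n \<and> of_int n \<le> Z}"
  by (simp add: int_Ioc_eq_atLeastAtMost)

lemma card_int_Ioc_le:
  assumes "0 \<le> Y"
  shows "real (card {n::int. X < of_int n \<and> of_int n \<le> X + Y}) \<le> Y + 1"
  by (rule card_int_le_diameter[OF finite_int_Ioc]) (use assms in auto)

lemma norm_sum_cis_le_card: "norm (\<Sum>n\<in>A. cis (f n)) \<le> real (card A)"
  using norm_sum[of "\<lambda>n. cis (f n)" A] by simp

lemma sum_int_atLeastAtMost_eq_sum_nat:
  fixes f :: "int \<Rightarrow> 'a::comm_monoid_add"
  assumes "a \<le> b"
  shows "sum f {a..b} = (\<Sum>j\<le>nat (b - a). f (a + int j))"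
  by (rule sum.reindex_bij_witness[of _ "\<lambda>j. a + int j" "\<lambda>n. nat (n - a)"]) (use assms in auto)

lemma kusmin_landau_int:
  fixes g :: "int \<Rightarrow> real" and m :: int and \<delta> :: real and S :: "int set"
  assumes "finite S" and convex: "\<And>a b n. a \<in> S \<Longrightarrow> b \<in> S \<Longrightarrow> a \<le> n \<Longrightarrow> n \<le> b \<Longrightarrow> n \<in> S"
    and "0 < \<delta>" "\<delta> < 1/2"
    and diff: "\<And>n. n \<in> S \<Longrightarrow> n + 1 \<in> S \<Longrightarrow> m + \<delta> \<le> g (n + 1) - g n \<and> g (n + 1) - g n \<le> m + 1 - \<delta>"
    and mono: "\<And>n. n \<in> S \<Longrightarrow> n + 2 \<in> S \<Longrightarrow> g (n + 1) - g n \<le> g (n + 2) - g (n + 1)"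
  shows "norm (\<Sum>n\<in>S. cis (2 * pi * g n)) \<le> 2 + 2 * cot (pi * \<delta>)"
proof (cases "S = {}")
  case True
  have "0 < cot (pi * \<delta>)" using assms(3,4) by (intro cot_gt_zero) auto
  then show ?thesis using True by simp
next
  case False
  define a where "a = Min S"
  define b where "b = Max S"
  have "a \<in> S" "b \<in> S" "a \<le> b"
    unfolding a_def b_def using \<open>finite S\<close> False by auto
  have S_eq: "S = {a..b}"
  proof
    show "S \<subseteq> {a..b}" using \<open>finite S\<close> unfolding a_def b_def by auto
  qed (use convex[OF \<open>a \<in> S\<close> \<open>b \<in> S\<close>] in auto)
  have in_S: "a + int j \<in> S" if "j \<le> nat (b - a)" for j
    using that \<open>a \<le> b\<close> unfolding S_eq by auto
  have "norm (\<Sum>j\<le>nat (b - a). cis (2 * pi * g (a + int j))) \<le> 2 + 2 * cot (pi * \<delta>)"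
  proof (rule kusmin_landau[where m = m])
    fix j assume "j < nat (b - a)"
    then show "m + \<delta> \<le> g (a + int (Suc j)) - g (a + int j) \<and> g (a + int (Suc j)) - g (a + int j) \<le> m + 1 - \<delta>"
      using diff[of "a + int j"] in_S[of j] in_S[of "Suc j"] by (simp add: ac_simps)
  next
    fix j assume "Suc j < nat (b - a)"
    then show "g (a + int (Suc j)) - g (a + int j) \<le> g (a + int (Suc (Suc j))) - g (a + int (Suc j))"
      using mono[of "a + int j"] in_S[of j] in_S[of "Suc (Suc j)"] by (simp add: ac_simps)
  qed (use assms(3,4) in auto)
  then show ?thesis unfolding S_eq sum_int_atLeastAtMost_eq_sum_nat[OF \<open>a \<le> b\<close>] .
qed

lemma has_cont_derivs_upto_MVT:
  assumes F: "has_cont_derivs_upto d F {X<..X+Y}" and "k < d"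
    and "X < x" "x < y" "y \<le> X + Y"
  obtains z where "x < z" "z < y" "F k y - F k x = (y - x) * F (Suc k) z"
proof -
  have sub: "{x..y} \<subseteq> {X<..X+Y}" using assms(3-5) by auto
  have deriv: "(F k has_real_derivative F (Suc k) z) (at z)" if "x < z" "z < y" for z
  proof -
    have "z \<in> interior {X<..X+Y}"
      using interior_maximal[of "{X<..<X+Y}" "{X<..X+Y}"] that assms(3-5) by auto
    moreover have "(F k has_real_derivative F (Suc k) z) (at z within {X<..X+Y})"
      using F \<open>k < d\<close> that assms(3-5) unfolding has_cont_derivs_upto_def by auto
    ultimately show ?thesis using at_within_interior by metis
  qed
  have "continuous_on {X<..X+Y} (F k)" using F \<open>k < d\<close> unfolding has_cont_derivs_upto_def by simp
  then have "continuous_on {x..y} (F k)" using continuous_on_subset sub by blast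
  moreover have "F k differentiable (at z)" if "x < z" "z < y" for z
    using deriv[OF that] real_differentiable_def by blast
  ultimately obtain l z where z: "x < z" "z < y" "DERIV (F k) z :> l" "F k y - F k x = (y - x) * l"
    using MVT[OF \<open>x < y\<close>] by blast
  moreover have "l = F (Suc k) z" using deriv[OF z(1,2)] z(3) DERIV_unique by blast
  ultimately show ?thesis using that by blast
qed

lemma has_cont_derivs_upto_diff_bounds:
  assumes F: "has_cont_derivs_upto d F {X<..X+Y}" and "k < d"
    and bounds: "\<And>x. x \<in> {X<..X+Y} \<Longrightarrow> lam \<le> F (Suc k) x \<and> F (Suc k) x \<le> Lam"
    and "X < x" "x \<le> y" "y \<le> X + Y"
  shows "lam * (y - x) \<le> F k y - F k x \<and> F k y - F k x \<le> Lam * (y - x)"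
proof (cases "x = y")
  case False
  then have "x < y" using \<open>x \<le> y\<close> by simp
  then obtain z where z: "x < z" "z < y" "F k y - F k x = (y - x) * F (Suc k) z"
    using has_cont_derivs_upto_MVT[OF F \<open>k < d\<close> \<open>X < x\<close> _ \<open>y \<le> X + Y\<close>] by blast
  moreover have "lam \<le> F (Suc k) z \<and> F (Suc k) z \<le> Lam" using bounds[of z] z assms(4-6) by auto
  ultimately show ?thesis using \<open>x < y\<close> by (simp add: mult_right_mono mult.commute)
qed simp

lemma has_cont_derivs_upto_shift_diff:
  assumes F: "has_cont_derivs_upto k F {X<..X+Y}" and "0 \<le> h"
  shows "has_cont_derivs_upto (k - 1) (\<lambda>j x. F j (x + h) - F j x) {X<..X + (Y - h)}"
proof -
  let ?S = "{X<..X+Y}" and ?T = "{X<..X + (Y - h)}"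
  have sub: "?T \<subseteq> ?S" and shift: "(\<lambda>x. x + h) ` ?T \<subseteq> ?S" using \<open>0 \<le> h\<close> by auto
  have "continuous_on ?T (\<lambda>x. F j (x + h) - F j x)" if "j \<le> k - 1" for j
  proof -
    have cont: "continuous_on ?S (F j)"
      using F that unfolding has_cont_derivs_upto_def by (cases k) auto
    have "continuous_on ?T (\<lambda>x. F j (x + h))"
      by (rule continuous_on_compose2[OF cont _ shift]) (intro continuous_intros)
    then show ?thesis using continuous_on_subset[OF cont sub] by (intro continuous_on_diff)
  qed
  moreover have "((\<lambda>x. F j (x + h) - F j x) has_real_derivative (F (Suc j) (x + h) - F (Suc j) x))
                   (at x within ?T)" if "j < k - 1" "x \<in> ?T" for j x
  proof -
    have "x + h \<in> ?S" "x \<in> ?S" using that sub \<open>0 \<le> h\<close> by auto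
    then have at_shift: "(F j has_real_derivative F (Suc j) (x + h)) (at (x + h) within ?S)"
      and at_x: "(F j has_real_derivative F (Suc j) x) (at x within ?S)"
      using F that unfolding has_cont_derivs_upto_def by auto
    have "(F j \<circ> (\<lambda>x. x + h) has_real_derivative F (Suc j) (x + h) * 1) (at x within ?T)"
      using DERIV_subset[OF at_shift shift]
      by (intro DERIV_image_chain) (auto intro!: derivative_eq_intros)
    then show ?thesis
      using DERIV_diff[OF _ DERIV_subset[OF at_x sub]] by (simp add: comp_def)
  qed
  ultimately show ?thesis unfolding has_cont_derivs_upto_def by auto
qed

definition exp_sum :: "(real \<Rightarrow> real) \<Rightarrow> real \<Rightarrow> real \<Rightarrow> complex" where
  "exp_sum f X Y = (\<Sum>n\<in>{n::int. X < of_int n \<and> of_int n \<le> X + Y}. cis (2 * pi * f (of_int n)))"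

lemma norm_exp_sum_le:
  assumes "0 \<le> Y"
  shows "norm (exp_sum f X Y) \<le> Y + 1"
  using norm_sum_cis_le_card card_int_Ioc_le[OF assms] unfolding exp_sum_def by (rule order_trans)

section \<open>The second derivative test\<close>

text \<open>A discrete form of \<open>lam \<le> f'' \<le> Lam\<close>: \<open>phi\<close> plays the role of \<open>f'\<close> and brackets the
  differences of \<open>g\<close>.\<close>
locale discrete_second_deriv =
  fixes I :: "int set" and g phi :: "int \<Rightarrow> real" and lam Lam Y :: real
  assumes finite: "finite I"
    and convex: "\<And>a b n. a \<in> I \<Longrightarrow> b \<in> I \<Longrightarrow> a \<le> n \<Longrightarrow> n \<le> b \<Longrightarrow> n \<in> I"
    and diameter: "\<And>a b. a \<in> I \<Longrightarrow> b \<in> I \<Longrightarrow> real_of_int (b - a) \<le> Y"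
    and Y_nonneg: "0 \<le> Y" and lam_pos: "0 < lam" and lam_le_Lam: "lam \<le> Lam"
    and slope: "\<And>a b. a \<in> I \<Longrightarrow> b \<in> I \<Longrightarrow> a \<le> b \<Longrightarrow>
                  lam * of_int (b - a) \<le> phi b - phi a \<and> phi b - phi a \<le> Lam * of_int (b - a)"
    and diff: "\<And>n. n \<in> I \<Longrightarrow> n + 1 \<in> I \<Longrightarrow> phi n \<le> g (n + 1) - g n \<and> g (n + 1) - g n \<le> phi (n + 1)"
begin

lemma phi_mono:
  assumes "a \<in> I" "b \<in> I" "a \<le> b"
  shows "phi a \<le> phi b"
proof -
  have "0 \<le> lam * of_int (b - a)" using lam_pos \<open>a \<le> b\<close> by simp
  then show ?thesis using slope[OF assms] by linarith
qed

lemma card_phi_window_le: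
  assumes "0 \<le> w"
  shows "real (card {n\<in>I. c \<le> phi n \<and> phi n < c + w}) \<le> w / lam + 1"
proof (rule card_int_le_diameter)
  fix a b assume ab: "a \<in> {n\<in>I. c \<le> phi n \<and> phi n < c + w}" "b \<in> {n\<in>I. c \<le> phi n \<and> phi n < c + w}"
  show "real_of_int (b - a) \<le> w / lam"
  proof (cases "a \<le> b")
    case True
    then have "lam * of_int (b - a) \<le> w" using slope[of a b] ab by auto
    then show ?thesis using lam_pos by (simp add: pos_le_divide_eq mult.commute)
  next
    case False
    moreover have "0 \<le> w / lam" using lam_pos \<open>0 \<le> w\<close> by simp
    ultimately show ?thesis by simp
  qed
qed (use finite lam_pos assms in auto)

lemma norm_sum_phi_window_le:
  fixes m :: int and \<delta> :: real
  assumes "0 < \<delta>" "\<delta> < 1/2"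
  shows "norm (\<Sum>n\<in>{n\<in>I. m + \<delta> \<le> phi n \<and> phi n < m + 1 - \<delta>}. cis (2 * pi * g n))
           \<le> 2 + 2 * cot (pi * \<delta>)"
proof (rule kusmin_landau_int[OF _ _ assms])
  let ?S = "{n\<in>I. m + \<delta> \<le> phi n \<and> phi n < m + 1 - \<delta>}"
  show "finite ?S" using finite by simp
  show "n \<in> ?S" if "a \<in> ?S" "b \<in> ?S" "a \<le> n" "n \<le> b" for a b n
    using that convex[of a b n] phi_mono[of a n] phi_mono[of n b] by auto
  show "m + \<delta> \<le> g (n + 1) - g n \<and> g (n + 1) - g n \<le> m + 1 - \<delta>" if "n \<in> ?S" "n + 1 \<in> ?S" for n
    using that diff[of n] by auto
  show "g (n + 1) - g n \<le> g (n + 2) - g (n + 1)" if "n \<in> ?S" "n + 2 \<in> ?S" for n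
  proof -
    have "n + 1 \<in> I" using that convex[of n "n + 2" "n + 1"] by auto
    then show ?thesis using that diff[of n] diff[of "n + 1"] by (auto simp: add.assoc)
  qed
qed

text \<open>On a level set, the terms with \<open>phi n\<close> within \<open>\<delta>\<close> of \<open>m\<close> are merely counted; Kusmin--Landau
  handles the rest.\<close>
lemma norm_sum_level_set_le:
  fixes m :: int and \<delta> :: real
  assumes "0 < \<delta>" "\<delta> < 1/2"
  shows "norm (\<Sum>n\<in>{n\<in>I. \<lfloor>phi n + \<delta>\<rfloor> = m}. cis (2 * pi * g n))
           \<le> 2 * \<delta> / lam + 3 + 2 * cot (pi * \<delta>)"
proof -
  let ?near = "{n\<in>I. m - \<delta> \<le> phi n \<and> phi n < m - \<delta> + 2 * \<delta>}"
  let ?far = "{n\<in>I. m + \<delta> \<le> phi n \<and> phi n < m + 1 - \<delta>}"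
  let ?sum = "\<lambda>S. \<Sum>n\<in>S. cis (2 * pi * g n)"
  have "{n\<in>I. \<lfloor>phi n + \<delta>\<rfloor> = m} = ?near \<union> ?far"
    using assms by (auto simp: floor_eq_iff)
  moreover have "?near \<inter> ?far = {}" by auto
  ultimately have split: "?sum {n\<in>I. \<lfloor>phi n + \<delta>\<rfloor> = m} = ?sum ?near + ?sum ?far"
    using finite by (simp add: sum.union_disjoint)
  have "real (card ?near) \<le> 2 * \<delta> / lam + 1"
    using card_phi_window_le[of "2 * \<delta>" "m - \<delta>"] \<open>0 < \<delta>\<close> by simp
  then have "norm (?sum ?near) \<le> 2 * \<delta> / lam + 1"
    using norm_sum_cis_le_card by (rule order_trans[rotated])
  then show ?thesis
    unfolding split using norm_sum_phi_window_le[OF assms, of m] norm_triangle_ineq[of "?sum ?near" "?sum ?far"]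
    by linarith
qed

lemma card_level_sets_le: "real (card ((\<lambda>n. \<lfloor>phi n + \<delta>\<rfloor>) ` I)) \<le> Lam * Y + 2"
proof -
  have "real (card ((\<lambda>n. \<lfloor>phi n + \<delta>\<rfloor>) ` I)) \<le> Lam * Y + 1 + 1"
  proof (rule card_int_le_diameter)
    fix c1 c2 assume "c1 \<in> (\<lambda>n. \<lfloor>phi n + \<delta>\<rfloor>) ` I" "c2 \<in> (\<lambda>n. \<lfloor>phi n + \<delta>\<rfloor>) ` I"
    then obtain a b where ab: "a \<in> I" "b \<in> I" "c1 = \<lfloor>phi a + \<delta>\<rfloor>" "c2 = \<lfloor>phi b + \<delta>\<rfloor>" by auto
    have "phi b - phi a \<le> Lam * Y"
    proof (cases "a \<le> b")
      case True
      then have "phi b - phi a \<le> Lam * of_int (b - a)" using slope ab by blast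
      also have "\<dots> \<le> Lam * Y" using diameter ab lam_pos lam_le_Lam by (intro mult_left_mono) auto
      finally show ?thesis .
    next
      case False
      moreover have "0 \<le> Lam * Y" using Y_nonneg lam_pos lam_le_Lam by simp
      ultimately show ?thesis using phi_mono[of b a] ab by simp
    qed
    then show "real_of_int (c2 - c1) \<le> Lam * Y + 1" unfolding ab by linarith
  qed (use finite Y_nonneg lam_pos lam_le_Lam in auto)
  then show ?thesis by simp
qed

theorem norm_sum_le:
  fixes \<delta> :: real
  assumes "0 < \<delta>" "\<delta> < 1/2"
  shows "norm (\<Sum>n\<in>I. cis (2 * pi * g n)) \<le> (Lam * Y + 2) * (2 * \<delta> / lam + 3 + 2 * cot (pi * \<delta>))"
proof -
  let ?level = "\<lambda>n. \<lfloor>phi n + \<delta>\<rfloor>"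
  have "norm (\<Sum>n\<in>I. cis (2 * pi * g n))
          = norm (\<Sum>m\<in>?level ` I. \<Sum>n\<in>{n\<in>I. ?level n = m}. cis (2 * pi * g n))"
    by (subst sum.image_gen[OF finite, of _ ?level]) (rule refl)
  also have "\<dots> \<le> (\<Sum>m\<in>?level ` I. 2 * \<delta> / lam + 3 + 2 * cot (pi * \<delta>))"
    using norm_sum_level_set_le[OF assms] by (intro sum_norm_le) auto
  also have "\<dots> \<le> (Lam * Y + 2) * (2 * \<delta> / lam + 3 + 2 * cot (pi * \<delta>))"
  proof -
    have "0 \<le> cot (pi * \<delta>)" using assms by (intro less_imp_le cot_gt_zero) auto
    then show ?thesis
      using card_level_sets_le[of \<delta>] assms lam_pos by (simp add: mult_right_mono)
  qed
  finally show ?thesis .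
qed

end

lemma exp_sum_second_deriv_bound:
  fixes \<delta> :: real
  assumes F: "has_cont_derivs_upto 2 F {X<..X+Y}" and "0 < Y" "0 < lam"
    and bounds: "\<And>x. x \<in> {X<..X+Y} \<Longrightarrow> lam \<le> F 2 x \<and> F 2 x \<le> Lam"
    and "0 < \<delta>" "\<delta> < 1/2"
  shows "norm (exp_sum (F 0) X Y) \<le> (Lam * Y + 2) * (2 * \<delta> / lam + 3 + 2 * cot (pi * \<delta>))"
proof -
  let ?I = "{n::int. X < of_int n \<and> of_int n \<le> X + Y}"
  have slope: "lam * (y - x) \<le> F 1 y - F 1 x \<and> F 1 y - F 1 x \<le> Lam * (y - x)"
    if "X < x" "x \<le> y" "y \<le> X + Y" for x y
    by (rule has_cont_derivs_upto_diff_bounds[OF F _ _ that]) (use bounds in \<open>auto simp: numeral_2_eq_2\<close>)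
  interpret discrete_second_deriv ?I "\<lambda>n. F 0 (of_int n)" "\<lambda>n. F 1 (of_int n)" lam Lam Y
  proof
    fix n assume n: "n \<in> ?I" "n + 1 \<in> ?I"
    then obtain z where z: "of_int n < z" "z < of_int n + 1" "F 0 (of_int n + 1) - F 0 (of_int n) = F 1 z"
      using has_cont_derivs_upto_MVT[OF F, of 0 "of_int n" "of_int n + 1"] by auto
    have "0 \<le> lam * (z - of_int n)" "0 \<le> lam * (of_int n + 1 - z)" using z \<open>0 < lam\<close> by simp_all
    then have "F 1 (of_int n) \<le> F 1 z" "F 1 z \<le> F 1 (of_int n + 1)"
      using slope[of "of_int n" z] slope[of z "of_int n + 1"] z n by auto
    then show "F 1 (of_int n) \<le> F 0 (of_int (n + 1)) - F 0 (of_int n)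
               \<and> F 0 (of_int (n + 1)) - F 0 (of_int n) \<le> F 1 (of_int (n + 1))"
      using z by simp
  next
    show "lam \<le> Lam" using bounds[of "X + Y"] \<open>0 < Y\<close> by simp
  qed (use finite_int_Ioc \<open>0 < Y\<close> \<open>0 < lam\<close> slope in auto)
  show ?thesis unfolding exp_sum_def using norm_sum_le[OF assms(5,6)] .
qed

lemma second_deriv_test:
  assumes F: "has_cont_derivs_upto 2 F {X<..X+Y}" and "1 \<le> Y" "0 < lam"
    and bounds: "\<And>x. x \<in> {X<..X+Y} \<Longrightarrow> lam \<le> F 2 x \<and> F 2 x \<le> Lam"
  shows "norm (exp_sum (F 0) X Y) \<le> 8 * (Y * Lam / sqrt lam + 1 / sqrt lam)"
proof -
  have "lam \<le> Lam" using bounds[of "X + Y"] \<open>1 \<le> Y\<close> by simp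
  show ?thesis
  proof (cases "1/16 \<le> lam")
    case True
    then have "1/4 \<le> sqrt lam" using real_sqrt_le_mono[of "1/16" lam] by (simp add: real_sqrt_divide)
    moreover have "sqrt lam \<le> Lam / sqrt lam"
      using \<open>lam \<le> Lam\<close> \<open>0 < lam\<close> by (simp add: le_divide_eq)
    ultimately have "1/4 \<le> Lam / sqrt lam" by linarith
    have "norm (exp_sum (F 0) X Y) \<le> Y + 1" using \<open>1 \<le> Y\<close> by (intro norm_exp_sum_le) simp
    also have "\<dots> \<le> 8 * (Y * (1/4))" using \<open>1 \<le> Y\<close> by simp
    also have "\<dots> \<le> 8 * (Y * (Lam / sqrt lam))"
      using \<open>1/4 \<le> Lam / sqrt lam\<close> \<open>1 \<le> Y\<close> by (intro mult_left_mono) auto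
    also have "\<dots> \<le> 8 * (Y * Lam / sqrt lam + 1 / sqrt lam)" using \<open>0 < lam\<close> by simp
    finally show ?thesis .
  next
    case False
    define \<delta> where "\<delta> = sqrt lam"
    have "0 < \<delta>" "\<delta> < 1/4" "\<delta> * \<delta> = lam"
      using False \<open>0 < lam\<close> real_sqrt_less_mono[of lam "1/16"] by (auto simp: \<delta>_def real_sqrt_divide)
    have "cot (pi * \<delta>) \<le> 1 / (pi * \<delta>)"
      using \<open>0 < \<delta>\<close> \<open>\<delta> < 1/4\<close> by (intro cot_le_inverse) auto
    also have "\<dots> \<le> 1 / (3 * \<delta>)"
      using \<open>0 < \<delta>\<close> pi_gt3 by (intro divide_left_mono mult_right_mono) auto
    finally have "\<delta> * cot (pi * \<delta>) \<le> 1/3" using \<open>0 < \<delta>\<close> by (simp add: field_simps)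
    have "2 * \<delta> / lam + 3 + 2 * cot (pi * \<delta>) = (2 + 3 * \<delta> + 2 * (\<delta> * cot (pi * \<delta>))) / \<delta>"
      using \<open>0 < \<delta>\<close> unfolding \<open>\<delta> * \<delta> = lam\<close>[symmetric] by (simp add: field_simps)
    also have "\<dots> \<le> 15 / 4 / \<delta>"
      using \<open>\<delta> * cot (pi * \<delta>) \<le> 1/3\<close> \<open>0 < \<delta>\<close> \<open>\<delta> < 1/4\<close> by (intro divide_right_mono) auto
    finally have "2 * \<delta> / lam + 3 + 2 * cot (pi * \<delta>) \<le> 15 / 4 / \<delta>" .
    then have "(Lam * Y + 2) * (2 * \<delta> / lam + 3 + 2 * cot (pi * \<delta>)) \<le> (Lam * Y + 2) * (15 / 4 / \<delta>)"
      using \<open>lam \<le> Lam\<close> \<open>0 < lam\<close> \<open>1 \<le> Y\<close> by (intro mult_left_mono) auto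
    also have "\<dots> \<le> 8 * (Y * Lam / \<delta> + 1 / \<delta>)"
      using \<open>0 < \<delta>\<close> \<open>lam \<le> Lam\<close> \<open>0 < lam\<close> \<open>1 \<le> Y\<close> by (simp add: field_simps)
    finally show ?thesis
      using exp_sum_second_deriv_bound[OF F _ \<open>0 < lam\<close> bounds \<open>0 < \<delta>\<close>] \<open>1 \<le> Y\<close> \<open>\<delta> < 1/4\<close>
      unfolding \<delta>_def by fastforce
  qed
qed

section \<open>Weyl--van der Corput differencing\<close>

lemma sum_shift_window:
  fixes g :: "int \<Rightarrow> 'a::comm_monoid_add"
  assumes "e < H" and supp: "\<And>n. n \<notin> {p..q} \<Longrightarrow> g n = 0"
  shows "(\<Sum>m\<in>{p - int H + 1..q}. g (m + int e)) = (\<Sum>n\<in>{p..q}. g n)"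
proof -
  have "(\<Sum>m\<in>{p - int H + 1..q}. g (m + int e)) = (\<Sum>n\<in>{p - int H + 1 + int e..q + int e}. g n)"
    by (rule sum.reindex_bij_witness[of _ "\<lambda>n. n - int e" "\<lambda>m. m + int e"]) auto
  also have "\<dots> = (\<Sum>n\<in>{p..q}. g n)"
    by (rule sum.mono_neutral_right) (use assms in auto)
  finally show ?thesis .
qed

lemma sum_abs_diff_le:
  fixes f :: "nat \<Rightarrow> real"
  assumes nonneg: "\<And>h. 0 \<le> f h" and "r < H"
  shows "(\<Sum>s<H. f (nat \<bar>int r - int s\<bar>)) \<le> f 0 + 2 * (\<Sum>h\<in>{1..<H}. f h)"
proof -
  have split: "{..<H} = {r} \<union> ({s. s < r} \<union> {s. r < s \<and> s < H})" using \<open>r < H\<close> by auto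
  have "(\<Sum>s<H. f (nat \<bar>int r - int s\<bar>))
      = f 0 + ((\<Sum>s | s < r. f (nat \<bar>int r - int s\<bar>)) + (\<Sum>s | r < s \<and> s < H. f (nat \<bar>int r - int s\<bar>)))"
    unfolding split by (subst sum.union_disjoint; auto)+
  also have "\<dots> = f 0 + ((\<Sum>s | s < r. f (r - s)) + (\<Sum>s | r < s \<and> s < H. f (s - r)))"
    by (intro arg_cong2[where f = "(+)"] sum.cong refl) (auto simp: nat_diff_distrib)
  also have "(\<Sum>s | s < r. f (r - s)) \<le> (\<Sum>h\<in>{1..<H}. f h)"
  proof -
    have "(\<Sum>s | s < r. f (r - s)) = (\<Sum>h\<in>(\<lambda>s. r - s) ` {s. s < r}. f h)"
      by (subst sum.reindex) (auto simp: inj_on_def)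
    also have "\<dots> \<le> (\<Sum>h\<in>{1..<H}. f h)" by (rule sum_mono2) (use \<open>r < H\<close> nonneg in auto)
    finally show ?thesis .
  qed
  also have "(\<Sum>s | r < s \<and> s < H. f (s - r)) \<le> (\<Sum>h\<in>{1..<H}. f h)"
  proof -
    have "(\<Sum>s | r < s \<and> s < H. f (s - r)) = (\<Sum>h\<in>(\<lambda>s. s - r) ` {s. r < s \<and> s < H}. f h)"
      by (subst sum.reindex) (auto simp: inj_on_def)
    also have "\<dots> \<le> (\<Sum>h\<in>{1..<H}. f h)" by (rule sum_mono2) (use nonneg in auto)
    finally show ?thesis .
  qed
  finally show ?thesis by simp
qed

lemma norm_sum_sq_le_windows:
  fixes u :: "int \<Rightarrow> complex" and p q :: int and H :: nat
  assumes supp: "\<And>n. n \<notin> {p..q} \<Longrightarrow> u n = 0"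
  defines "M \<equiv> {p - int H + 1..q}"
  shows "(real H * norm (\<Sum>n\<in>{p..q}. u n))\<^sup>2
           \<le> real (card M) * (\<Sum>m\<in>M. (norm (\<Sum>r<H. u (m + int r)))\<^sup>2)"
proof -
  have "(\<Sum>m\<in>M. u (m + int r)) = (\<Sum>n\<in>{p..q}. u n)" if "r < H" for r
    unfolding M_def by (rule sum_shift_window) (use that supp in auto)
  then have "of_nat H * (\<Sum>n\<in>{p..q}. u n) = (\<Sum>r<H. \<Sum>m\<in>M. u (m + int r))" by simp
  also have "\<dots> = (\<Sum>m\<in>M. \<Sum>r<H. u (m + int r))" by (rule sum.swap)
  finally have "real H * norm (\<Sum>n\<in>{p..q}. u n) = norm (\<Sum>m\<in>M. \<Sum>r<H. u (m + int r))"
    by (metis norm_mult norm_of_nat)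
  also have "\<dots> \<le> (\<Sum>m\<in>M. norm (\<Sum>r<H. u (m + int r)))" by (rule norm_sum)
  finally have "(real H * norm (\<Sum>n\<in>{p..q}. u n))\<^sup>2 \<le> (\<Sum>m\<in>M. norm (\<Sum>r<H. u (m + int r)))\<^sup>2"
    by (intro power_mono) auto
  also have "\<dots> \<le> (\<Sum>m\<in>M. (norm (\<Sum>r<H. u (m + int r)))\<^sup>2) * card M"
    by (rule sum_squared_le_sum_of_squares)
  finally show ?thesis by (simp add: mult.commute)
qed

lemma sum_norm_windows_sq_le:
  fixes u :: "int \<Rightarrow> complex" and p q :: int and H :: nat
  assumes supp: "\<And>n. n \<notin> {p..q} \<Longrightarrow> u n = 0"
  defines "M \<equiv> {p - int H + 1..q}"
    and "C \<equiv> \<lambda>h::nat. \<Sum>n\<in>{p..q}. u (n + int h) * cnj (u n)"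
  shows "(\<Sum>m\<in>M. (norm (\<Sum>r<H. u (m + int r)))\<^sup>2) \<le> H * norm (C 0) + 2 * H * (\<Sum>h\<in>{1..<H}. norm (C h))"
proof -
  define W where "W r s = (\<Sum>m\<in>M. u (m + int r) * cnj (u (m + int s)))" for r s :: nat
  have W_eq: "norm (W r s) = norm (C (nat \<bar>int r - int s\<bar>))" if "r < H" "s < H" for r s
  proof (cases "s \<le> r")
    case True
    have "W r s = (\<Sum>m\<in>M. (\<lambda>n. u (n + int (r - s)) * cnj (u n)) (m + int s))"
      unfolding W_def using True by (intro sum.cong refl) (simp add: algebra_simps of_nat_diff)
    also have "\<dots> = C (r - s)" unfolding M_def C_def by (rule sum_shift_window) (use that supp in auto)
    finally show ?thesis using True by (simp add: nat_diff_distrib)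
  next
    case False
    have "W r s = (\<Sum>m\<in>M. (\<lambda>n. u n * cnj (u (n + int (s - r)))) (m + int r))"
      unfolding W_def using False by (intro sum.cong refl) (simp add: algebra_simps of_nat_diff)
    also have "\<dots> = (\<Sum>n\<in>{p..q}. u n * cnj (u (n + int (s - r))))" unfolding M_def
      by (rule sum_shift_window) (use that supp in auto)
    also have "\<dots> = cnj (C (s - r))" unfolding C_def cnj_sum by (simp add: mult.commute)
    finally show ?thesis using False by (simp add: nat_diff_distrib)
  qed
  have "complex_of_real (\<Sum>m\<in>M. (norm (\<Sum>r<H. u (m + int r)))\<^sup>2)
          = (\<Sum>m\<in>M. (\<Sum>r<H. u (m + int r)) * cnj (\<Sum>r<H. u (m + int r)))"
    unfolding of_real_sum complex_norm_square ..
  also have "\<dots> = (\<Sum>r<H. \<Sum>s<H. W r s)"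
    unfolding W_def cnj_sum sum_product by (subst sum.swap, rule sum.cong[OF refl], rule sum.swap)
  finally have "norm (complex_of_real (\<Sum>m\<in>M. (norm (\<Sum>r<H. u (m + int r)))\<^sup>2))
                  = norm (\<Sum>r<H. \<Sum>s<H. W r s)" by simp
  then have "(\<Sum>m\<in>M. (norm (\<Sum>r<H. u (m + int r)))\<^sup>2) = norm (\<Sum>r<H. \<Sum>s<H. W r s)"
    unfolding norm_of_real by (simp add: sum_nonneg)
  also have "\<dots> \<le> (\<Sum>r<H. norm (\<Sum>s<H. W r s))" by (rule norm_sum)
  also have "\<dots> \<le> (\<Sum>r<H. \<Sum>s<H. norm (W r s))" by (intro sum_mono norm_sum)
  also have "\<dots> = (\<Sum>r<H. \<Sum>s<H. norm (C (nat \<bar>int r - int s\<bar>)))"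
    using W_eq by (intro sum.cong refl) auto
  also have "\<dots> \<le> (\<Sum>r<H. norm (C 0) + 2 * (\<Sum>h\<in>{1..<H}. norm (C h)))"
    by (intro sum_mono sum_abs_diff_le) auto
  also have "\<dots> = H * norm (C 0) + 2 * H * (\<Sum>h\<in>{1..<H}. norm (C h))"
    by (simp add: algebra_simps)
  finally show ?thesis .
qed

theorem van_der_corput_inequality:
  fixes u :: "int \<Rightarrow> complex" and p q :: int and H :: nat
  assumes "1 \<le> H" "p \<le> q + 1" and supp: "\<And>n. n \<notin> {p..q} \<Longrightarrow> u n = 0"
  shows "(real H)\<^sup>2 * (norm (\<Sum>n\<in>{p..q}. u n))\<^sup>2 \<le>
     real (nat (q - p + 1) + H - 1) *
       (real H * norm (\<Sum>n\<in>{p..q}. u n * cnj (u n))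
        + 2 * real H * (\<Sum>h\<in>{1..<H}. norm (\<Sum>n\<in>{p..q}. u (n + int h) * cnj (u n))))"
proof -
  let ?M = "{p - int H + 1..q}"
  have "(real H)\<^sup>2 * (norm (\<Sum>n\<in>{p..q}. u n))\<^sup>2 = (real H * norm (\<Sum>n\<in>{p..q}. u n))\<^sup>2"
    by (simp add: power_mult_distrib)
  also have "\<dots> \<le> real (card ?M) * (\<Sum>m\<in>?M. (norm (\<Sum>r<H. u (m + int r)))\<^sup>2)"
    by (rule norm_sum_sq_le_windows[where u = u and p = p and q = q and H = H, OF supp])
  also have "\<dots> \<le> real (card ?M) * (real H * norm (\<Sum>n\<in>{p..q}. u n * cnj (u n))
        + 2 * real H * (\<Sum>h\<in>{1..<H}. norm (\<Sum>n\<in>{p..q}. u (n + int h) * cnj (u n))))"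
    using sum_norm_windows_sq_le[where u = u and p = p and q = q and H = H, OF supp] by (intro mult_left_mono) auto
  also have "card ?M = nat (q - p + 1) + H - 1" using assms(1,2) by auto
  finally show ?thesis .
qed

lemma exp_sum_van_der_corput:
  fixes f :: "real \<Rightarrow> real" and X Y :: real and H :: nat
  assumes "0 \<le> Y" "1 \<le> H"
  defines "N \<equiv> real (card {n::int. X < of_int n \<and> of_int n \<le> X + Y})"
  shows "(real H)\<^sup>2 * (norm (exp_sum f X Y))\<^sup>2 \<le> (N + real H - 1) *
     (real H * N + 2 * real H * (\<Sum>h\<in>{1..<H}. norm (exp_sum (\<lambda>x. f (x + real h) - f x) X (Y - real h))))"
proof -
  define I where "I = {n::int. X < of_int n \<and> of_int n \<le> X + Y}"
  define p where "p = \<lfloor>X\<rfloor> + 1"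
  define q where "q = \<lfloor>X + Y\<rfloor>"
  have I_eq: "I = {p..q}" unfolding I_def p_def q_def by (rule int_Ioc_eq_atLeastAtMost)
  define u where "u n = (if n \<in> I then cis (2 * pi * f (of_int n)) else 0)" for n
  have "(real H)\<^sup>2 * (norm (\<Sum>n\<in>{p..q}. u n))\<^sup>2 \<le>
     real (nat (q - p + 1) + H - 1) *
       (real H * norm (\<Sum>n\<in>{p..q}. u n * cnj (u n))
        + 2 * real H * (\<Sum>h\<in>{1..<H}. norm (\<Sum>n\<in>{p..q}. u (n + int h) * cnj (u n))))"
    by (rule van_der_corput_inequality)
       (use \<open>1 \<le> H\<close> \<open>0 \<le> Y\<close> in \<open>auto simp: p_def q_def u_def I_eq floor_mono\<close>)
  moreover have "(\<Sum>n\<in>{p..q}. u n) = exp_sum f X Y"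
    unfolding exp_sum_def I_def[symmetric] I_eq u_def by simp
  moreover have "real (nat (q - p + 1) + H - 1) = N + real H - 1"
    using \<open>1 \<le> H\<close> unfolding N_def I_def[symmetric] I_eq by simp
  moreover have "(\<Sum>n\<in>{p..q}. u n * cnj (u n)) = N"
    unfolding N_def I_def[symmetric] I_eq u_def by (simp add: cis_cnj cis_mult)
  moreover have "(\<Sum>n\<in>{p..q}. u (n + int h) * cnj (u n))
                   = exp_sum (\<lambda>x. f (x + real h) - f x) X (Y - real h)" for h :: nat
  proof -
    have "(\<Sum>n\<in>{p..q}. u (n + int h) * cnj (u n)) =
          (\<Sum>n\<in>{p..q}. if n + int h \<in> I then cis (2 * pi * (f (of_int n + real h) - f (of_int n))) else 0)"
      unfolding u_def by (intro sum.cong refl) (auto simp: I_eq cis_cnj cis_mult algebra_simps)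
    also have "\<dots> = (\<Sum>n\<in>{n\<in>{p..q}. n + int h \<in> I}. cis (2 * pi * (f (of_int n + real h) - f (of_int n))))"
      by (rule sum.inter_filter[symmetric]) simp
    also have "{n\<in>{p..q}. n + int h \<in> I} = {n::int. X < of_int n \<and> of_int n \<le> X + (Y - real h)}"
      unfolding I_eq[symmetric] unfolding I_def by auto
    finally show ?thesis unfolding exp_sum_def by simp
  qed
  ultimately show ?thesis by simp
qed

lemma powr_diff_ge:
  fixes b h :: real
  assumes "0 \<le> b" "b < 1" "1 \<le> h"
  shows "(1 - b) * h powr (- b) \<le> h powr (1 - b) - (h - 1) powr (1 - b)"
proof (cases "h = 1")
  case False
  then have "h - 1 < h" "0 < h - 1" using \<open>1 \<le> h\<close> by auto
  have deriv: "DERIV (\<lambda>t. t powr (1 - b)) t :> (1 - b) * t powr (- b)" if "h - 1 \<le> t" for t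
    using has_real_derivative_powr[of t "1 - b"] that \<open>0 < h - 1\<close> by simp
  obtain z where z: "h - 1 < z" "z < h"
    and mvt: "h powr (1 - b) - (h - 1) powr (1 - b) = (h - (h - 1)) * ((1 - b) * z powr (- b))"
    using MVT2[OF \<open>h - 1 < h\<close>, of "\<lambda>t. t powr (1 - b)" "\<lambda>t. (1 - b) * t powr (- b)"] deriv by auto
  have "h powr (- b) \<le> z powr (- b)" using z \<open>0 < h - 1\<close> \<open>0 \<le> b\<close> by (intro powr_mono2') auto
  then show ?thesis using mvt \<open>b < 1\<close> by (simp add: mult_left_mono)
qed (use assms in simp)

lemma sum_powr_neg_le:
  fixes b :: real and H :: nat
  assumes "0 \<le> b" "b < 1"
  shows "(\<Sum>h\<in>{1..<H}. real h powr (- b)) \<le> real H powr (1 - b) / (1 - b)"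
proof -
  have partial: "(\<Sum>h\<in>{1..<Suc n}. real h powr (- b)) \<le> real n powr (1 - b) / (1 - b)" for n
  proof (induction n)
    case (Suc n)
    have "real (Suc n) powr (- b) \<le> (real (Suc n) powr (1 - b) - real n powr (1 - b)) / (1 - b)"
      using powr_diff_ge[OF assms, of "real (Suc n)"] \<open>b < 1\<close> by (simp add: field_simps)
    then show ?case using Suc.IH \<open>b < 1\<close> by (simp add: diff_divide_distrib)
  qed simp
  show ?thesis
  proof (cases H)
    case (Suc n)
    then have "(\<Sum>h\<in>{1..<H}. real h powr (- b)) \<le> real n powr (1 - b) / (1 - b)"
      using partial[of n] by simp
    also have "\<dots> \<le> real H powr (1 - b) / (1 - b)"
      using Suc \<open>b < 1\<close> by (intro divide_right_mono powr_mono2) auto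
    finally show ?thesis .
  qed simp
qed

section \<open>The \<open>k\<close>-th derivative test\<close>

definition vdc_theta :: "nat \<Rightarrow> real" where
  "vdc_theta k = 4 / 2 ^ k"

definition vdc_alpha :: "nat \<Rightarrow> real" where
  "vdc_alpha k = 1 / (2 ^ k - 2)"

definition vdc_bound :: "nat \<Rightarrow> real \<Rightarrow> real \<Rightarrow> real \<Rightarrow> real" where
  "vdc_bound k Y lam Lam = Y * (Lam / lam) powr vdc_theta k * lam powr vdc_alpha k
                           + Y powr (1 - vdc_theta k) * lam powr (- vdc_alpha k)"

lemma vdc_exponent_bounds:
  assumes "2 \<le> k"
  shows "0 < vdc_theta k" "vdc_theta k \<le> 1" "0 < vdc_alpha k" "vdc_alpha k \<le> 1/2"
proof -
  have "(2::real) ^ 2 \<le> 2 ^ k" using assms by (intro power_increasing) auto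
  then show "0 < vdc_theta k" "vdc_theta k \<le> 1" "0 < vdc_alpha k" "vdc_alpha k \<le> 1/2"
    unfolding vdc_theta_def vdc_alpha_def by (auto simp: field_simps)
qed

lemma vdc_theta_Suc: "vdc_theta k = 2 * vdc_theta (Suc k)"
  by (simp add: vdc_theta_def)

lemma vdc_alpha_Suc:
  assumes "2 \<le> k"
  shows "(1 - 2 * vdc_alpha (Suc k)) * vdc_alpha k = 2 * vdc_alpha (Suc k)"
proof -
  define t where "t = (2::real) ^ k"
  have "2 ^ 2 \<le> t" unfolding t_def using assms by (intro power_increasing) auto
  then have "2 * vdc_alpha (Suc k) = 1 / (t - 1)" "vdc_alpha k = 1 / (t - 2)"
    unfolding vdc_alpha_def t_def by (simp_all add: field_simps)
  moreover have "(1 - 1 / (t - 1)) * (1 / (t - 2)) = 1 / (t - 1)"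
    using \<open>2 ^ 2 \<le> t\<close> by (simp add: field_simps)
  ultimately show ?thesis by simp
qed

lemma vdc_bound_two:
  assumes "0 < Y" "0 < lam" "lam \<le> Lam"
  shows "vdc_bound 2 Y lam Lam = Y * Lam / sqrt lam + 1 / sqrt lam"
proof -
  have theta: "vdc_theta 2 = 1" and alpha: "vdc_alpha 2 = 1/2"
    by (simp_all add: vdc_theta_def vdc_alpha_def)
  have "lam powr (1/2) = sqrt lam" "lam powr (- (1/2)) = 1 / sqrt lam" "(Lam / lam) powr 1 = Lam / lam"
    using assms by (simp_all add: powr_half_sqrt powr_minus_divide)
  then show ?thesis
    unfolding vdc_bound_def theta alpha using assms by (simp add: field_simps real_div_sqrt)
qed

lemma add_one_le_five_sqrt:
  fixes Y :: real
  assumes "1 \<le> Y" "Y \<le> 20"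
  shows "Y + 1 \<le> 5 * sqrt Y"
proof -
  have "sqrt Y \<le> 9/2" using assms by (intro real_le_lsqrt) (auto simp: power2_eq_square)
  moreover have "1 \<le> sqrt Y" "sqrt Y * sqrt Y = Y" using assms by auto
  moreover have "0 \<le> (sqrt Y - 1/4) * (19/4 - sqrt Y)"
    using calculation by (intro mult_nonneg_nonneg) linarith+
  moreover have "(sqrt Y - 1/4) * (19/4 - sqrt Y) = 5 * sqrt Y - sqrt Y * sqrt Y - 19/16"
    by algebra
  ultimately show ?thesis by linarith
qed

text \<open>The identity that makes the exponents \<open>vdc_alpha\<close> reproduce themselves in the induction.\<close>
lemma powr_vdc_alpha_scale:
  assumes "2 \<le> k" "0 < lam"
  shows "(lam powr (- 2 * vdc_alpha (Suc k)) * lam) powr vdc_alpha k = 1 / lam powr (- 2 * vdc_alpha (Suc k))"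
proof -
  have "lam powr (- 2 * vdc_alpha (Suc k)) * lam = lam powr (1 - 2 * vdc_alpha (Suc k))"
    using assms(2) by (simp add: powr_diff powr_minus field_simps)
  then have "(lam powr (- 2 * vdc_alpha (Suc k)) * lam) powr vdc_alpha k = lam powr (2 * vdc_alpha (Suc k))"
    by (simp add: powr_powr vdc_alpha_Suc[OF assms(1)])
  then show ?thesis by (simp add: powr_minus divide_inverse)
qed

lemma trivial_le_vdc_bound:
  assumes "2 \<le> k" "1 \<le> Y" "0 < lam" "lam \<le> Lam"
    and regime: "1 \<le> lam \<or> Y < 20 \<or> 4/25 * Y < lam powr (- 2 * vdc_alpha (Suc k))"
  shows "Y + 1 \<le> 5 * vdc_bound (Suc k) Y lam Lam"
proof -
  define \<theta> where "\<theta> = vdc_theta (Suc k)"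
  define \<alpha> where "\<alpha> = vdc_alpha (Suc k)"
  define x where "x = Y * (Lam / lam) powr \<theta> * lam powr \<alpha>"
  define z where "z = Y powr (1 - \<theta>) * lam powr (- \<alpha>)"
  have "vdc_bound (Suc k) Y lam Lam = x + z" "0 \<le> x" "0 \<le> z"
    unfolding vdc_bound_def x_def z_def \<theta>_def \<alpha>_def using assms(2) by auto
  have "0 < \<theta>" "\<theta> \<le> 1/2" "0 < \<alpha>"
    using vdc_exponent_bounds[OF assms(1)] vdc_exponent_bounds[of "Suc k"] assms(1)
    unfolding \<theta>_def \<alpha>_def vdc_theta_Suc[of k] by auto
  have sqrt_le_z: "sqrt Y * lam powr (- \<alpha>) \<le> z"
  proof -
    have "Y powr (1/2) \<le> Y powr (1 - \<theta>)" using assms(2) \<open>\<theta> \<le> 1/2\<close> by (intro powr_mono) auto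
    then show ?thesis unfolding z_def using assms(2) by (simp add: powr_half_sqrt mult_right_mono)
  qed
  consider "1 \<le> lam" | "lam < 1" "Y < 20" | "lam < 1" "4/25 * Y < lam powr (- 2 * \<alpha>)"
    using regime unfolding \<alpha>_def by linarith
  then show ?thesis
  proof cases
    case 1
    have "1 \<le> (Lam / lam) powr \<theta>" "1 \<le> lam powr \<alpha>"
      using 1 assms(3,4) \<open>0 < \<alpha>\<close> \<open>0 < \<theta>\<close> by (auto intro!: ge_one_powr_ge_zero)
    then have "Y * 1 * 1 \<le> x" unfolding x_def using assms(2) by (intro mult_mono) auto
    then show ?thesis using \<open>vdc_bound (Suc k) Y lam Lam = x + z\<close> \<open>0 \<le> z\<close> assms(2) by linarith
  next
    case 2
    have "1 \<le> lam powr (- \<alpha>)"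
      using 2 assms(3) \<open>0 < \<alpha>\<close> by (simp add: powr_minus one_le_inverse_iff powr_le1 less_imp_le)
    then have "sqrt Y \<le> z" using sqrt_le_z assms(2) by (smt (verit) mult_le_cancel_left1 real_sqrt_ge_one)
    then show ?thesis
      using add_one_le_five_sqrt[of Y] 2 assms(2) \<open>vdc_bound (Suc k) Y lam Lam = x + z\<close> \<open>0 \<le> x\<close>
      by linarith
  next
    case 3
    have "sqrt (4/25 * Y) \<le> sqrt (lam powr (- 2 * \<alpha>))" using 3 by simp
    also have "sqrt (lam powr (- 2 * \<alpha>)) = lam powr (- \<alpha>)"
      using assms(3) by (simp add: powr_half_sqrt[symmetric] powr_powr)
    finally have "2/5 * sqrt Y \<le> lam powr (- \<alpha>)" by (simp add: real_sqrt_mult real_sqrt_divide)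
    then have "sqrt Y * (2/5 * sqrt Y) \<le> sqrt Y * lam powr (- \<alpha>)"
      using assms(2) by (intro mult_left_mono) auto
    then have "sqrt Y * (2/5 * sqrt Y) \<le> z" using sqrt_le_z by linarith
    moreover have "sqrt Y * (2/5 * sqrt Y) = 2/5 * Y" using assms(2) by simp
    ultimately have "2/5 * Y \<le> z" by linarith
    then show ?thesis using \<open>vdc_bound (Suc k) Y lam Lam = x + z\<close> \<open>0 \<le> x\<close> assms(2) by linarith
  qed
qed

lemma vdc_bound_shift_le:
  fixes lam Lam Y h u :: real
  assumes "2 \<le> k" "0 < lam" "lam \<le> Lam" "0 < h" "h \<le> u" "h < Y"
    and u: "u = lam powr (- 2 * vdc_alpha (Suc k))"
  shows "vdc_bound k (Y - h) (h * lam) (h * Lam)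
           \<le> Y * (Lam / lam) powr vdc_theta k / u + Y powr (1 - vdc_theta k) * (h * lam) powr (- vdc_alpha k)"
proof -
  note exps = vdc_exponent_bounds[OF assms(1)]
  have "0 < u" unfolding u using assms(2) by simp
  have "(h * lam) powr vdc_alpha k \<le> (u * lam) powr vdc_alpha k"
    using assms(2,4,5) exps by (intro powr_mono2) auto
  also have "\<dots> = 1 / u" unfolding u using powr_vdc_alpha_scale[OF assms(1,2)] .
  finally have "(Y - h) * (Lam / lam) powr vdc_theta k * (h * lam) powr vdc_alpha k
                  \<le> Y * (Lam / lam) powr vdc_theta k * (1 / u)"
    using assms(4,6) by (intro mult_mono) auto
  moreover have "(Y - h) powr (1 - vdc_theta k) \<le> Y powr (1 - vdc_theta k)"
    using assms(4,6) exps by (intro powr_mono2) auto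
  ultimately show ?thesis
    unfolding vdc_bound_def using assms(4) by (intro add_mono mult_right_mono) simp_all
qed

lemma sum_vdc_bound_shift_le:
  fixes H :: nat and lam Lam Y u :: real
  assumes "2 \<le> k" "0 < lam" "lam \<le> Lam" "u \<le> H" "real H \<le> u + 1" "u < Y"
    and u: "u = lam powr (- 2 * vdc_alpha (Suc k))"
  shows "(\<Sum>h\<in>{1..<H}. vdc_bound k (Y - real h) (real h * lam) (real h * Lam))
           \<le> (real H - 1) * (Y * (Lam / lam) powr vdc_theta k / u)
              + Y powr (1 - vdc_theta k) * H * u / (1 - vdc_alpha k)"
proof -
  define \<alpha> where "\<alpha> = vdc_alpha k"
  have "0 < \<alpha>" "\<alpha> \<le> 1/2" using vdc_exponent_bounds[OF assms(1)] by (auto simp: \<alpha>_def)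
  have "0 < u" unfolding u using assms(2) by simp
  have inner: "lam powr (- \<alpha>) * (\<Sum>h\<in>{1..<H}. real h powr (- \<alpha>)) \<le> H * u / (1 - \<alpha>)"
  proof -
    have "lam powr (- \<alpha>) * (\<Sum>h\<in>{1..<H}. real h powr (- \<alpha>)) \<le> lam powr (- \<alpha>) * (H powr (1 - \<alpha>) / (1 - \<alpha>))"
      using sum_powr_neg_le[of \<alpha> H] \<open>0 < \<alpha>\<close> \<open>\<alpha> \<le> 1/2\<close> by (intro mult_left_mono) auto
    also have "\<dots> = H * (H * lam) powr (- \<alpha>) / (1 - \<alpha>)"
      using assms(4) \<open>0 < u\<close> by (simp add: powr_diff powr_minus powr_mult field_simps)
    also have "\<dots> \<le> H * (u * lam) powr (- \<alpha>) / (1 - \<alpha>)"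
      using assms(2,4) \<open>0 < u\<close> \<open>0 < \<alpha>\<close> \<open>\<alpha> \<le> 1/2\<close>
      by (intro divide_right_mono mult_left_mono powr_mono2') auto
    also have "(u * lam) powr (- \<alpha>) = u"
      using powr_vdc_alpha_scale[OF assms(1,2)] \<open>0 < u\<close> unfolding u \<alpha>_def powr_minus by simp
    finally show ?thesis .
  qed
  have "(\<Sum>h\<in>{1..<H}. vdc_bound k (Y - real h) (real h * lam) (real h * Lam))
          \<le> (\<Sum>h\<in>{1..<H}. Y * (Lam / lam) powr vdc_theta k / u + Y powr (1 - vdc_theta k) * (real h * lam) powr (- \<alpha>))"
    unfolding \<alpha>_def using assms by (intro sum_mono vdc_bound_shift_le) auto
  also have "\<dots> = (real H - 1) * (Y * (Lam / lam) powr vdc_theta k / u)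
                   + Y powr (1 - vdc_theta k) * (lam powr (- \<alpha>) * (\<Sum>h\<in>{1..<H}. real h powr (- \<alpha>)))"
    using assms(4) \<open>0 < u\<close> by (simp add: sum.distrib sum_distrib_left powr_mult algebra_simps of_nat_diff)
  also have "\<dots> \<le> (real H - 1) * (Y * (Lam / lam) powr vdc_theta k / u)
                   + Y powr (1 - vdc_theta k) * (H * u / (1 - \<alpha>))"
    using inner by (intro add_left_mono mult_left_mono) auto
  finally show ?thesis unfolding \<alpha>_def by (simp add: mult.assoc)
qed

text \<open>The constant 8 comes from the second derivative test; the others only have to satisfy
  \<open>vdc_const_Suc\<close>.\<close>
definition vdc_const :: "nat \<Rightarrow> real" where
  "vdc_const k = (if k = 2 then 8 else if k = 3 then 13/2 else 5)"

lemma vdc_const_ge_five: "5 \<le> vdc_const k"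
  by (simp add: vdc_const_def)

lemma vdc_const_Suc:
  assumes "2 \<le> k"
  shows "121/100 * (21/20 + 2 * vdc_const k) \<le> (vdc_const (Suc k))\<^sup>2"
    and "121/100 * (2 * vdc_const k / (1 - vdc_alpha k)) \<le> (vdc_const (Suc k))\<^sup>2"
proof -
  consider "k = 2" | "k = 3" | "4 \<le> k" using assms by linarith
  then have "121/100 * (21/20 + 2 * vdc_const k) \<le> (vdc_const (Suc k))\<^sup>2 \<and>
             121/100 * (2 * vdc_const k / (1 - vdc_alpha k)) \<le> (vdc_const (Suc k))\<^sup>2"
  proof cases
    case 3
    then have "vdc_alpha k \<le> 1/2" using vdc_exponent_bounds[of k] by auto
    then have "2 * 5 / (1 - vdc_alpha k) \<le> 20" by (simp add: field_simps)
    then have "121/100 * (2 * 5 / (1 - vdc_alpha k)) \<le> 121/100 * 20" by (rule mult_left_mono) simp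
    also have "\<dots> \<le> 5\<^sup>2" by simp
    finally show ?thesis using 3 by (simp add: vdc_const_def)
  qed (simp_all add: vdc_const_def vdc_alpha_def power2_eq_square)
  then show "121/100 * (21/20 + 2 * vdc_const k) \<le> (vdc_const (Suc k))\<^sup>2"
    and "121/100 * (2 * vdc_const k / (1 - vdc_alpha k)) \<le> (vdc_const (Suc k))\<^sup>2" by auto
qed

lemma vdc_bound_Suc_eq:
  assumes "2 \<le> k" "0 < Y" "0 < lam" "lam \<le> Lam"
    and u: "u = lam powr (- 2 * vdc_alpha (Suc k))"
  shows "vdc_bound (Suc k) Y lam Lam
           = sqrt (Y * (Y * (Lam / lam) powr vdc_theta k / u)) + sqrt (Y * (Y powr (1 - vdc_theta k) * u))"
proof -
  define \<theta> where "\<theta> = vdc_theta (Suc k)"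
  define \<alpha> where "\<alpha> = vdc_alpha (Suc k)"
  have sq: "(a powr e)\<^sup>2 = a powr (2 * e)" if "0 < a" for a e :: real
    using that by (simp add: power2_eq_square powr_add[symmetric])
  have "vdc_theta k = 2 * \<theta>" unfolding \<theta>_def by (rule vdc_theta_Suc)
  have "u = 1 / lam powr (2 * \<alpha>)" unfolding u \<alpha>_def using powr_minus_divide[of lam "2 * vdc_alpha (Suc k)"] by simp
  have "(Y * (Lam / lam) powr \<theta> * lam powr \<alpha>)\<^sup>2 = Y\<^sup>2 * ((Lam / lam) powr \<theta>)\<^sup>2 * (lam powr \<alpha>)\<^sup>2"
    by (simp add: power_mult_distrib)
  also have "\<dots> = Y * (Y * (Lam / lam) powr vdc_theta k / u)"
    unfolding \<open>vdc_theta k = 2 * \<theta>\<close> \<open>u = 1 / lam powr (2 * \<alpha>)\<close>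
    using sq[of "Lam / lam" \<theta>] sq[of lam \<alpha>] assms(3,4) by (simp add: power2_eq_square[of Y])
  finally have x: "sqrt (Y * (Y * (Lam / lam) powr vdc_theta k / u)) = Y * (Lam / lam) powr \<theta> * lam powr \<alpha>"
    using assms(2) by (metis real_sqrt_abs abs_of_nonneg less_imp_le mult_nonneg_nonneg powr_ge_zero)
  have "(Y powr (1 - \<theta>) * lam powr (- \<alpha>))\<^sup>2 = (Y powr (1 - \<theta>))\<^sup>2 * (lam powr (- \<alpha>))\<^sup>2"
    by (simp add: power_mult_distrib)
  also have "\<dots> = Y * (Y powr (1 - vdc_theta k) * u)"
  proof -
    have "(Y powr (1 - \<theta>))\<^sup>2 = Y * Y powr (1 - 2 * \<theta>)"
      unfolding sq[OF assms(2)] using powr_add[of Y 1 "1 - 2 * \<theta>"] assms(2) by (simp add: algebra_simps)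
    moreover have "(lam powr (- \<alpha>))\<^sup>2 = u" unfolding sq[OF assms(3)] u \<alpha>_def by simp
    ultimately show ?thesis unfolding \<open>vdc_theta k = 2 * \<theta>\<close> by simp
  qed
  finally have z: "sqrt (Y * (Y powr (1 - vdc_theta k) * u)) = Y powr (1 - \<theta>) * lam powr (- \<alpha>)"
    by (metis real_sqrt_abs abs_of_nonneg mult_nonneg_nonneg powr_ge_zero)
  show ?thesis unfolding vdc_bound_def x z \<theta>_def \<alpha>_def ..
qed

lemma add_le_power2_sqrt_add:
  fixes s t :: real
  assumes "0 \<le> s" "0 \<le> t"
  shows "s + t \<le> (sqrt s + sqrt t)\<^sup>2"
  using assms by (simp add: power2_sum)

lemma vdc_step_arith:
  fixes S N H Y u a b c c' q Sig :: real
  assumes weyl: "H\<^sup>2 * S\<^sup>2 \<le> (N + H - 1) * (H * N + 2 * H * Sig)"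
    and Sig: "Sig \<le> c' * ((H - 1) * a + b * H * q)"
    and "0 \<le> N" "N \<le> Y + 1" "u \<le> H" "H \<le> u + 1" "1 \<le> u" "u \<le> 4/25 * Y" "20 \<le> Y"
    and "Y \<le> u * a" "0 \<le> b" "0 \<le> c'" "0 \<le> q" "0 \<le> c" "0 \<le> S"
    and C1: "121/100 * (21/20 + 2 * c') \<le> c\<^sup>2" and C2: "121/100 * (2 * c' * q) \<le> c\<^sup>2"
  shows "S \<le> c * (sqrt (Y * a) + sqrt (Y * b))"
proof -
  define P where "P = (21/20 + 2 * c') * a + 2 * c' * q * b"
  have "0 < H" "0 < u * a" using assms(5,7,9,10) by auto
  then have "0 \<le> a" using assms(7) by (simp add: zero_less_mult_iff)
  have "N \<le> 21/20 * (u * a)" using assms(4,9,10) by linarith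
  also have "\<dots> \<le> 21/20 * (H * a)" using \<open>0 \<le> a\<close> assms(5) by (intro mult_left_mono mult_right_mono) auto
  finally have "N \<le> 21/20 * (H * a)" .
  moreover have "c' * ((H - 1) * a + b * H * q) \<le> H * (c' * a + c' * q * b)"
    using mult_nonneg_nonneg[OF \<open>0 \<le> c'\<close> \<open>0 \<le> a\<close>] by (simp add: algebra_simps)
  moreover have "H * P = 21/20 * (H * a) + 2 * (H * (c' * a + c' * q * b))"
    unfolding P_def by (simp add: algebra_simps)
  ultimately have "N + 2 * Sig \<le> H * P" using Sig by linarith
  have "0 \<le> P" unfolding P_def using \<open>0 \<le> a\<close> assms(11-13) by simp
  have "H * (H * S\<^sup>2) \<le> H * (H * ((N + H - 1) * P))"
  proof -
    have "H * (H * S\<^sup>2) = H\<^sup>2 * S\<^sup>2" by (simp add: power2_eq_square)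
    also have "\<dots> \<le> (N + H - 1) * (H * N + 2 * H * Sig)" by (rule weyl)
    also have "\<dots> = H * ((N + H - 1) * (N + 2 * Sig))" by (simp add: algebra_simps)
    also have "\<dots> \<le> H * ((N + H - 1) * (H * P))"
      using \<open>N + 2 * Sig \<le> H * P\<close> \<open>0 < H\<close> assms(3,5,7) by (intro mult_left_mono) auto
    also have "\<dots> = H * (H * ((N + H - 1) * P))" by (simp add: algebra_simps)
    finally show ?thesis .
  qed
  then have "S\<^sup>2 \<le> (N + H - 1) * P" using \<open>0 < H\<close> by (simp add: mult_le_cancel_left_pos)
  also have "\<dots> \<le> 121/100 * Y * P"
    using assms(4,6,8,9) \<open>0 \<le> P\<close> by (intro mult_right_mono) auto
  also have "\<dots> = 121/100 * (21/20 + 2 * c') * (Y * a) + 121/100 * (2 * c' * q) * (Y * b)"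
    unfolding P_def by (simp add: algebra_simps)
  also have "\<dots> \<le> c\<^sup>2 * (Y * a) + c\<^sup>2 * (Y * b)"
    using C1 C2 assms(9,11) \<open>0 \<le> a\<close> by (intro add_mono mult_right_mono) auto
  also have "\<dots> = c\<^sup>2 * (Y * a + Y * b)" by (simp add: algebra_simps)
  also have "\<dots> \<le> c\<^sup>2 * (sqrt (Y * a) + sqrt (Y * b))\<^sup>2"
    using add_le_power2_sqrt_add[of "Y * a" "Y * b"] assms(9,11) \<open>0 \<le> a\<close> by (intro mult_left_mono) auto
  also have "\<dots> = (c * (sqrt (Y * a) + sqrt (Y * b)))\<^sup>2" by (simp add: power_mult_distrib)
  finally show ?thesis
    by (rule power2_le_imp_le) (use assms(9,11,14) \<open>0 \<le> a\<close> in auto)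
qed

lemma sum_norm_exp_sum_shift_le:
  fixes H :: nat and u :: real
  assumes "2 \<le> k"
    and IH: "\<And>F X Y lam Lam. has_cont_derivs_upto k F {X<..X+Y} \<Longrightarrow> 1 \<le> Y \<Longrightarrow> 0 < lam \<Longrightarrow>
               (\<And>x. x \<in> {X<..X+Y} \<Longrightarrow> lam \<le> F k x \<and> F k x \<le> Lam) \<Longrightarrow>
               norm (exp_sum (F 0) X Y) \<le> vdc_const k * vdc_bound k Y lam Lam"
    and F: "has_cont_derivs_upto (Suc k) F {X<..X+Y}"
    and bounds: "\<And>x. x \<in> {X<..X+Y} \<Longrightarrow> lam \<le> F (Suc k) x \<and> F (Suc k) x \<le> Lam"
    and "0 < lam" "lam \<le> Lam" "u \<le> H" "real H \<le> u + 1" "u \<le> 4/25 * Y" "20 \<le> Y"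
    and u: "u = lam powr (- 2 * vdc_alpha (Suc k))"
  shows "(\<Sum>h\<in>{1..<H}. norm (exp_sum (\<lambda>x. F 0 (x + real h) - F 0 x) X (Y - real h)))
           \<le> vdc_const k * ((real H - 1) * (Y * (Lam / lam) powr vdc_theta k / u)
                             + Y powr (1 - vdc_theta k) * H * u / (1 - vdc_alpha k))"
proof -
  have "norm (exp_sum (\<lambda>x. F 0 (x + real h) - F 0 x) X (Y - real h))
          \<le> vdc_const k * vdc_bound k (Y - real h) (real h * lam) (real h * Lam)" if "h \<in> {1..<H}" for h
  proof -
    have "1 \<le> real h" "real h + 1 \<le> real H" using that by auto
    then have "real h < Y" "1 \<le> Y - real h" using assms(7-10) by auto
    have shifted: "has_cont_derivs_upto k (\<lambda>j x. F j (x + real h) - F j x) {X<..X + (Y - real h)}"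
      using has_cont_derivs_upto_shift_diff[OF F, of "real h"] by simp
    have "real h * lam \<le> F k (x + real h) - F k x \<and> F k (x + real h) - F k x \<le> real h * Lam"
      if "x \<in> {X<..X + (Y - real h)}" for x
      using has_cont_derivs_upto_diff_bounds[OF F _ bounds, of x "x + real h"] that
      by (simp add: mult.commute)
    then show ?thesis using IH[OF shifted \<open>1 \<le> Y - real h\<close>] \<open>1 \<le> real h\<close> \<open>0 < lam\<close> by simp
  qed
  then have "(\<Sum>h\<in>{1..<H}. norm (exp_sum (\<lambda>x. F 0 (x + real h) - F 0 x) X (Y - real h)))
               \<le> vdc_const k * (\<Sum>h\<in>{1..<H}. vdc_bound k (Y - real h) (real h * lam) (real h * Lam))"
    unfolding sum_distrib_left by (rule sum_mono)
  also have "\<dots> \<le> vdc_const k * ((real H - 1) * (Y * (Lam / lam) powr vdc_theta k / u)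
                             + Y powr (1 - vdc_theta k) * H * u / (1 - vdc_alpha k))"
    using assms(1,5-10) u vdc_const_ge_five[of k]
    by (intro mult_left_mono sum_vdc_bound_shift_le) auto
  finally show ?thesis .
qed

lemma exp_sum_le_vdc_bound_Suc_by_differencing:
  assumes "2 \<le> k"
    and IH: "\<And>F X Y lam Lam. has_cont_derivs_upto k F {X<..X+Y} \<Longrightarrow> 1 \<le> Y \<Longrightarrow> 0 < lam \<Longrightarrow>
               (\<And>x. x \<in> {X<..X+Y} \<Longrightarrow> lam \<le> F k x \<and> F k x \<le> Lam) \<Longrightarrow>
               norm (exp_sum (F 0) X Y) \<le> vdc_const k * vdc_bound k Y lam Lam"
    and F: "has_cont_derivs_upto (Suc k) F {X<..X+Y}" and "1 \<le> Y" "0 < lam"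
    and bounds: "\<And>x. x \<in> {X<..X+Y} \<Longrightarrow> lam \<le> F (Suc k) x \<and> F (Suc k) x \<le> Lam"
    and "lam < 1" "20 \<le> Y" "lam powr (- 2 * vdc_alpha (Suc k)) \<le> 4/25 * Y"
  shows "norm (exp_sum (F 0) X Y) \<le> vdc_const (Suc k) * vdc_bound (Suc k) Y lam Lam"
proof -
  define u where "u = lam powr (- 2 * vdc_alpha (Suc k))"
  have "lam \<le> Lam" using bounds[of "X + Y"] \<open>1 \<le> Y\<close> by simp
  have "u \<le> 4/25 * Y" using assms(9) unfolding u_def .
  have "1 \<le> u" unfolding u_def using \<open>lam < 1\<close> \<open>0 < lam\<close> vdc_exponent_bounds[of "Suc k"] assms(1)
    by (auto intro!: ge_one_powr_ge_zero simp: powr_minus one_le_inverse_iff powr_le1)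
  \<comment> \<open>\<open>H \<approx> u\<close> balances the diagonal term \<open>Y\<^sup>2 / H\<close> of the differencing against the shifted sums.\<close>
  define H where "H = nat \<lceil>u\<rceil>"
  have "u \<le> H" "real H \<le> u + 1" "1 \<le> H" unfolding H_def using \<open>1 \<le> u\<close> by linarith+
  define N where "N = real (card {n::int. X < of_int n \<and> of_int n \<le> X + Y})"
  have "0 \<le> N" "N \<le> Y + 1" unfolding N_def using card_int_Ioc_le[of Y X] \<open>1 \<le> Y\<close> by auto
  have "Y \<le> u * (Y * (Lam / lam) powr vdc_theta k / u)"
    using \<open>1 \<le> u\<close> \<open>1 \<le> Y\<close> \<open>0 < lam\<close> \<open>lam \<le> Lam\<close> vdc_exponent_bounds[OF assms(1)]
    by (simp add: ge_one_powr_ge_zero)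
  have "norm (exp_sum (F 0) X Y) \<le> vdc_const (Suc k) *
          (sqrt (Y * (Y * (Lam / lam) powr vdc_theta k / u)) + sqrt (Y * (Y powr (1 - vdc_theta k) * u)))"
  proof (rule vdc_step_arith)
    show "(real H)\<^sup>2 * (norm (exp_sum (F 0) X Y))\<^sup>2 \<le> (N + real H - 1) * (real H * N + 2 * real H *
            (\<Sum>h\<in>{1..<H}. norm (exp_sum (\<lambda>x. F 0 (x + real h) - F 0 x) X (Y - real h))))"
      unfolding N_def using exp_sum_van_der_corput \<open>1 \<le> Y\<close> \<open>1 \<le> H\<close> by simp
    have "(\<Sum>h\<in>{1..<H}. norm (exp_sum (\<lambda>x. F 0 (x + real h) - F 0 x) X (Y - real h)))
            \<le> vdc_const k * ((real H - 1) * (Y * (Lam / lam) powr vdc_theta k / u)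
                               + Y powr (1 - vdc_theta k) * H * u / (1 - vdc_alpha k))"
      using assms(1) IH F bounds \<open>0 < lam\<close> \<open>lam \<le> Lam\<close> \<open>u \<le> H\<close> \<open>real H \<le> u + 1\<close>
        \<open>u \<le> 4/25 * Y\<close> \<open>20 \<le> Y\<close> u_def
      by (rule sum_norm_exp_sum_shift_le)
    then show "(\<Sum>h\<in>{1..<H}. norm (exp_sum (\<lambda>x. F 0 (x + real h) - F 0 x) X (Y - real h)))
            \<le> vdc_const k * ((real H - 1) * (Y * (Lam / lam) powr vdc_theta k / u)
                               + Y powr (1 - vdc_theta k) * u * H * (1 / (1 - vdc_alpha k)))"
      by (simp add: mult_ac)
    show "121/100 * (2 * vdc_const k * (1 / (1 - vdc_alpha k))) \<le> (vdc_const (Suc k))\<^sup>2"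
      using vdc_const_Suc(2)[OF assms(1)] by simp
  qed (use \<open>0 \<le> N\<close> \<open>N \<le> Y + 1\<close> \<open>u \<le> H\<close> \<open>real H \<le> u + 1\<close> \<open>1 \<le> u\<close> \<open>u \<le> 4/25 * Y\<close> \<open>20 \<le> Y\<close>
           \<open>Y \<le> u * (Y * (Lam / lam) powr vdc_theta k / u)\<close> vdc_const_Suc(1)[OF assms(1)]
           vdc_const_ge_five[of k] vdc_const_ge_five[of "Suc k"] vdc_exponent_bounds[OF assms(1)] in auto)
  then show ?thesis
    using vdc_bound_Suc_eq[OF assms(1) _ \<open>0 < lam\<close> \<open>lam \<le> Lam\<close> u_def] \<open>1 \<le> Y\<close> by simp
qed

lemma exp_sum_le_vdc_bound_Suc:
  assumes "2 \<le> k"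
    and IH: "\<And>F X Y lam Lam. has_cont_derivs_upto k F {X<..X+Y} \<Longrightarrow> 1 \<le> Y \<Longrightarrow> 0 < lam \<Longrightarrow>
               (\<And>x. x \<in> {X<..X+Y} \<Longrightarrow> lam \<le> F k x \<and> F k x \<le> Lam) \<Longrightarrow>
               norm (exp_sum (F 0) X Y) \<le> vdc_const k * vdc_bound k Y lam Lam"
    and F: "has_cont_derivs_upto (Suc k) F {X<..X+Y}" and "1 \<le> Y" "0 < lam"
    and bounds: "\<And>x. x \<in> {X<..X+Y} \<Longrightarrow> lam \<le> F (Suc k) x \<and> F (Suc k) x \<le> Lam"
  shows "norm (exp_sum (F 0) X Y) \<le> vdc_const (Suc k) * vdc_bound (Suc k) Y lam Lam"
proof (cases "1 \<le> lam \<or> Y < 20 \<or> 4/25 * Y < lam powr (- 2 * vdc_alpha (Suc k))")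
  case True
  have "lam \<le> Lam" using bounds[of "X + Y"] \<open>1 \<le> Y\<close> by simp
  have "0 \<le> vdc_bound (Suc k) Y lam Lam" using \<open>1 \<le> Y\<close> by (simp add: vdc_bound_def)
  then have "5 * vdc_bound (Suc k) Y lam Lam \<le> vdc_const (Suc k) * vdc_bound (Suc k) Y lam Lam"
    using vdc_const_ge_five by (rule mult_right_mono[rotated])
  moreover have "Y + 1 \<le> 5 * vdc_bound (Suc k) Y lam Lam"
    using True by (rule trivial_le_vdc_bound[OF assms(1,4,5) \<open>lam \<le> Lam\<close>])
  moreover have "norm (exp_sum (F 0) X Y) \<le> Y + 1" using \<open>1 \<le> Y\<close> by (intro norm_exp_sum_le) simp
  ultimately show ?thesis by linarith
next
  case False
  then have "lam < 1" "20 \<le> Y" "lam powr (- 2 * vdc_alpha (Suc k)) \<le> 4/25 * Y" by auto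
  with assms show ?thesis by (rule exp_sum_le_vdc_bound_Suc_by_differencing)
qed

theorem kth_deriv_test:
  assumes "2 \<le> k" "has_cont_derivs_upto k F {X<..X+Y}" "1 \<le> Y" "0 < lam"
    and "\<And>x. x \<in> {X<..X+Y} \<Longrightarrow> lam \<le> F k x \<and> F k x \<le> Lam"
  shows "norm (exp_sum (F 0) X Y) \<le> vdc_const k * vdc_bound k Y lam Lam"
  using assms
proof (induction k arbitrary: F X Y lam Lam rule: nat_induct_at_least)
  case base
  have "lam \<le> Lam" using base.prems(2) base.prems(4)[of "X + Y"] by simp
  then show ?case
    using second_deriv_test[OF base.prems] vdc_bound_two[of Y lam Lam] base.prems(2,3)
    by (simp add: vdc_const_def)
next
  case (Suc k)
  show ?case using Suc.hyps Suc.IH Suc.prems by (rule exp_sum_le_vdc_bound_Suc)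
qed

lemma constC4_ge_ten: "10 \<le> constC4"
proof -
  have "14142/10000 \<le> sqrt 2" by (rule real_le_rsqrt) (simp add: power2_eq_square)
  then have "48284/10000 \<le> constB" unfolding constB_def by simp
  then have B: "(48284/10000)^3 \<le> constB^3" by (intro power_mono) auto
  have pi: "3141592653588 / 1000000000000 \<le> pi" "pi \<le> 31415926535899 / 10000000000000"
    using pi_approx by simp_all
  have "sqrt pi \<le> 1775/1000" using pi by (intro real_le_lsqrt) (auto simp: power2_eq_square)
  have "14756/10000 \<le> sqrt (1 + 3 * pi / 8)" using pi by (intro real_le_rsqrt) (auto simp: power2_eq_square)
  have "2 / (1775/1000) * (1 + 14756/10000) \<le> 2 / sqrt pi * (1 + sqrt (1 + 3 * pi / 8))"
  proof (rule mult_mono)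
    show "2 / (1775/1000) \<le> 2 / sqrt pi" using \<open>sqrt pi \<le> 1775/1000\<close> by (intro divide_left_mono) auto
  qed (use \<open>14756/10000 \<le> sqrt (1 + 3 * pi / 8)\<close> in auto)
  then have A: "2 / (1775/1000) * (1 + 14756/10000) \<le> constA" unfolding constA_def .
  have "(625::real) \<le> 2 * (2 / (1775/1000) * (1 + 14756/10000)) * (48284/10000)^3"
    by (simp add: power3_eq_cube)
  also have "\<dots> \<le> 2 * constA * constB^3"
    using A B by (intro mult_mono) auto
  finally have "625 \<le> 2 * constA * constB ^ 3" .
  have "(625::real) powr (1/4) = 5"
  proof -
    have "(625::real) = 5 powr 4" by (simp add: powr_realpow[symmetric])
    then have "(625::real) powr (1/4) = (5 powr 4) powr (1/4)" by simp
    also have "\<dots> = 5" by (simp add: powr_powr)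
    finally show ?thesis .
  qed
  moreover have "(625::real) powr (1/4) \<le> (2 * constA * constB ^ 3) powr (1/4)"
    using \<open>625 \<le> 2 * constA * constB ^ 3\<close> by (intro powr_mono2) auto
  ultimately show ?thesis unfolding constC4_def by simp
qed

theorem corollary25:
  fixes d :: nat and X Y lam Lam :: real and F :: "nat \<Rightarrow> real \<Rightarrow> real"
  assumes "d \<ge> 4"
    and "Y > real d"
    and "has_cont_derivs_upto d F {X<..X+Y}"
    and "0 < lam"
    and "\<And>x. x \<in> {X<..X+Y} \<Longrightarrow> lam \<le> F d x \<and> F d x \<le> Lam"
  shows "norm ((1 / complex_of_real Y) *
            (\<Sum>n\<in>{n::int. X < of_int n \<and> of_int n \<le> X + Y}.
               cis (2 * pi * F 0 (of_int n))))
         \<le> constC4 * max ((Lam / lam) powr (4 / 2 ^ d) * lam powr (1 / (2 ^ d - 2)))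
                           (Y powr (- 4 / 2 ^ d) * lam powr (- 1 / (2 ^ d - 2)))"
proof -
  define a where "a = (Lam / lam) powr (4 / 2 ^ d) * lam powr (1 / (2 ^ d - 2))"
  define b where "b = Y powr (- 4 / 2 ^ d) * lam powr (- 1 / (2 ^ d - 2))"
  have "1 \<le> Y" using assms(1,2) by simp
  have "Y powr (1 - vdc_theta d) = Y * Y powr (- 4 / 2 ^ d)"
    using powr_add[of Y 1 "- (4 / 2 ^ d)"] \<open>1 \<le> Y\<close> by (simp add: vdc_theta_def)
  then have "vdc_bound d Y lam Lam = Y * (a + b)"
    unfolding vdc_bound_def a_def b_def by (simp add: vdc_theta_def vdc_alpha_def algebra_simps)
  moreover have "vdc_const d = 5" using assms(1) by (simp add: vdc_const_def)
  ultimately have "norm (exp_sum (F 0) X Y) \<le> 5 * (Y * (a + b))"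
    using kth_deriv_test[OF _ assms(3) \<open>1 \<le> Y\<close> assms(4,5)] assms(1) by simp
  then have "norm ((1 / complex_of_real Y) * exp_sum (F 0) X Y) \<le> 5 * (a + b)"
    using \<open>1 \<le> Y\<close> by (simp add: norm_mult norm_divide field_simps)
  also have "\<dots> \<le> 10 * max a b" by simp
  also have "\<dots> \<le> constC4 * max a b"
    using constC4_ge_ten by (intro mult_right_mono) (auto simp: a_def b_def max_def)
  finally show ?thesis unfolding a_def b_def exp_sum_def .
qed

end
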